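(* Let $X$ be a Banach space with $n(X)=1$. The following are equivalent: (a) $X$ has the BPBpp-nu; (b) $X$ has the BPBop-nu; (c) $X$ is one-dimensional.
   Context: Let $X$ be a Banach space over $\mathbb{K}\in\{\mathbb{R},\mathbb{C}\}$, $\mathcal{L}(X)$ the bounded linear operators on $X$ with operator norm. $\Pi(X)=\{(x,x^* )\in S_X\times S_{X^*}: x^*(x)=1\}$; $v(T)=\sup\{|x^*(Tx)|:(x,x^* )\in\Pi(X)\}$; the numerical index is $n(X)=\inf\{v(T): T\in\mathcal{L}(X),\ \|T\|=1\}$. $X$ has the BPBpp-nu if for every $\varepsilon>0$ there is $\eta(\varepsilon)>0$ such that whenever $T\in\mathcal{L}(X)$ with $v(T)=1$ and $(x,x^* )\in\Pi(X)$ satisfy $|x^*(Tx)|>1-\eta(\varepsilon)$, there exists $S\in\mathcal{L}(X)$ with $v(S)=1$, $|x^*(Sx)|=1$ and $\|S-T\|<\varepsilon$. $X$ has the BPBop-nu if for every $\varepsilon>0$ there is $\eta(\varepsilon)>0$ such that whenever $T\in\mathcal{L}(X)$ with $v(T)=1$ and $(x,x^* )\in\Pi(X)$ satisfy $|x^*(Tx)|>1-\eta(\varepsilon)$, there is $(y,y^* )\in\Pi(X)$ with $|y^*(Ty)|=1$, $\|y-x\|<\varepsilon$ and $\|y^*-x^*\|<\varepsilon$. *)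

theory Defs
  imports "HOL-Analysis.Analysis"
begin

text \<open>Scalar field 'k (real or complex), scalar multiplication sc on a Banach space 'a.
  For the real case sc = scaleR; for the complex case sc is a complex scalar
  multiplication compatible with the real structure and the norm.\<close>

definition complex_normed_structure :: "(complex \<Rightarrow> 'a::real_normed_vector \<Rightarrow> 'a) \<Rightarrow> bool" where
  "complex_normed_structure scC \<longleftrightarrow>
     (\<forall>r x. scC (complex_of_real r) x = r *\<^sub>R x) \<and>
     (\<forall>a b x. scC (a * b) x = scC a (scC b x)) \<and>
     (\<forall>a b x. scC (a + b) x = scC a x + scC b x) \<and>
     (\<forall>a x y. scC a (x + y) = scC a x + scC a y) \<and>
     (\<forall>a x. norm (scC a x) = cmod a * norm x)"

definition bop :: "('k::real_normed_field \<Rightarrow> 'a::real_normed_vector \<Rightarrow> 'a) \<Rightarrow> ('a \<Rightarrow> 'a) \<Rightarrow> bool" where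
  "bop sc T \<longleftrightarrow> bounded_linear T \<and> (\<forall>c x. T (sc c x) = sc c (T x))"

definition bfun :: "('k::real_normed_field \<Rightarrow> 'a::real_normed_vector \<Rightarrow> 'a) \<Rightarrow> ('a \<Rightarrow> 'k) \<Rightarrow> bool" where
  "bfun sc f \<longleftrightarrow> bounded_linear f \<and> (\<forall>c x. f (sc c x) = c * f x)"

definition states :: "('k::real_normed_field \<Rightarrow> 'a::real_normed_vector \<Rightarrow> 'a) \<Rightarrow> ('a \<times> ('a \<Rightarrow> 'k)) set" where
  "states sc = {(x, f). norm x = 1 \<and> bfun sc f \<and> onorm f = 1 \<and> f x = 1}"

definition numrad :: "('k::real_normed_field \<Rightarrow> 'a::real_normed_vector \<Rightarrow> 'a) \<Rightarrow> ('a \<Rightarrow> 'a) \<Rightarrow> real" where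
  "numrad sc T = (SUP p \<in> states sc. norm (snd p (T (fst p))))"

definition numidx :: "('k::real_normed_field \<Rightarrow> 'a::real_normed_vector \<Rightarrow> 'a) \<Rightarrow> real" where
  "numidx sc = (INF T \<in> {T. bop sc T \<and> onorm T = 1}. numrad sc T)"

definition BPBpp_nu :: "('k::real_normed_field \<Rightarrow> 'a::real_normed_vector \<Rightarrow> 'a) \<Rightarrow> bool" where
  "BPBpp_nu sc \<longleftrightarrow> (\<forall>\<epsilon>>0. \<exists>\<eta>>0. \<forall>T x f.
      bop sc T \<and> numrad sc T = 1 \<and> (x, f) \<in> states sc \<and> norm (f (T x)) > 1 - \<eta> \<longrightarrow>
      (\<exists>S. bop sc S \<and> numrad sc S = 1 \<and> norm (f (S x)) = 1 \<and> onorm (\<lambda>z. S z - T z) < \<epsilon>))"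

definition BPBop_nu :: "('k::real_normed_field \<Rightarrow> 'a::real_normed_vector \<Rightarrow> 'a) \<Rightarrow> bool" where
  "BPBop_nu sc \<longleftrightarrow> (\<forall>\<epsilon>>0. \<exists>\<eta>>0. \<forall>T x f.
      bop sc T \<and> numrad sc T = 1 \<and> (x, f) \<in> states sc \<and> norm (f (T x)) > 1 - \<eta> \<longrightarrow>
      (\<exists>y g. (y, g) \<in> states sc \<and> norm (g (T y)) = 1 \<and> norm (y - x) < \<epsilon> \<and>
             onorm (\<lambda>z. g z - f z) < \<epsilon>))"

definition one_dim :: "('k::real_normed_field \<Rightarrow> 'a::real_normed_vector \<Rightarrow> 'a) \<Rightarrow> bool" where
  "one_dim sc \<longleftrightarrow> (\<exists>e. e \<noteq> 0 \<and> (\<forall>x. \<exists>c. x = sc c e))"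

end

theory Submission
  imports Defs
begin

(* Numerical index 1 means v(T) = ||T||, so every rank-one operator x \<mapsto> phi(x) u with
   ||phi|| = ||u|| = 1 has numerical radius 1, and if dim X \<ge> 2 one may take phi(u) = 0.
   Applying either Bishop-Phelps-Bollobas property to such operators first yields norming
   functionals with prescribed values near u; applying it once more to the rank-one operator built
   from a convex combination of them forces a functional that vanishes (or is small) at a unit
   vector to have modulus 1 close to it, a contradiction.  In dimension one |x*(Tx)| does not
   depend on the state, so both properties hold trivially.  States exist by Hahn-Banach, proved
   via Zorn's lemma and complexification. *)

(* Graphs of linear functionals on subspaces, dominated by the norm and normalised at x0: the
   partial objects of the Zorn's lemma proof of Hahn-Banach. *)
definition norm_dominated_graph :: "'a::real_normed_vector \<Rightarrow> ('a \<times> real) set \<Rightarrow> bool" where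
  "norm_dominated_graph x0 G \<longleftrightarrow>
     (\<forall>x a b. (x, a) \<in> G \<longrightarrow> (x, b) \<in> G \<longrightarrow> a = b) \<and>
     (\<forall>x a y b. (x, a) \<in> G \<longrightarrow> (y, b) \<in> G \<longrightarrow> (x + y, a + b) \<in> G) \<and>
     (\<forall>r x a. (x, a) \<in> G \<longrightarrow> (r *\<^sub>R x, r * a) \<in> G) \<and>
     (\<forall>x a. (x, a) \<in> G \<longrightarrow> a \<le> norm x) \<and> (x0, 1) \<in> G"

lemma norm_dominated_graphD:
  assumes "norm_dominated_graph x0 G"
  shows "(x, a) \<in> G \<Longrightarrow> (x, b) \<in> G \<Longrightarrow> a = b"
    and "(x, a) \<in> G \<Longrightarrow> (y, b) \<in> G \<Longrightarrow> (x + y, a + b) \<in> G"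
    and "(x, a) \<in> G \<Longrightarrow> (r *\<^sub>R x, r * a) \<in> G"
    and "(x, a) \<in> G \<Longrightarrow> a \<le> norm x"
    and "(x0, 1) \<in> G"
  using assms unfolding norm_dominated_graph_def by blast+

lemma norm_dominated_graph_line:
  assumes "norm x0 = 1"
  shows "norm_dominated_graph x0 (range (\<lambda>t. (t *\<^sub>R x0, t)))"
  using assms unfolding norm_dominated_graph_def
  by (auto simp: scaleR_add_left[symmetric] intro: range_eqI[of _ _ 1])

lemma norm_dominated_graph_Union:
  assumes "C \<noteq> {}" "\<And>G. G \<in> C \<Longrightarrow> norm_dominated_graph x0 G" "chain\<^sub>\<subseteq> C"
  shows "norm_dominated_graph x0 (\<Union>C)"
proof -
  have common: "\<exists>G\<in>C. p \<in> G \<and> q \<in> G" if pq: "p \<in> \<Union>C" "q \<in> \<Union>C" for p q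
  proof -
    obtain G1 G2 where "G1 \<in> C" "G2 \<in> C" "p \<in> G1" "q \<in> G2" using pq by blast
    moreover have "G1 \<subseteq> G2 \<or> G2 \<subseteq> G1"
      using assms(3) \<open>G1 \<in> C\<close> \<open>G2 \<in> C\<close> unfolding chain_subset_def by blast
    ultimately show ?thesis by blast
  qed
  note G = norm_dominated_graphD[OF assms(2)]
  show ?thesis
    unfolding norm_dominated_graph_def
  proof (intro conjI allI impI)
    fix x a b assume "(x, a) \<in> \<Union>C" "(x, b) \<in> \<Union>C"
    then show "a = b" using common G(1) by metis
  next
    fix x a y b assume "(x, a) \<in> \<Union>C" "(y, b) \<in> \<Union>C"
    then show "(x + y, a + b) \<in> \<Union>C" using common G(2) by (meson UnionI)
  next
    fix r x a assume "(x, a) \<in> \<Union>C"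
    then show "(r *\<^sub>R x, r * a) \<in> \<Union>C" using G(3) by blast
  next
    fix x a assume "(x, a) \<in> \<Union>C"
    then show "a \<le> norm x" using G(4) by blast
  next
    show "(x0, 1) \<in> \<Union>C" using assms(1) G(5) by blast
  qed
qed

lemma norm_dominated_graph_extension_constant:
  assumes M: "norm_dominated_graph x0 M"
  obtains c where "\<And>s a. (s, a) \<in> M \<Longrightarrow> a - norm (s - z) \<le> c"
    and "\<And>s a. (s, a) \<in> M \<Longrightarrow> c \<le> norm (s + z) - a"
proof -
  note G = norm_dominated_graphD[OF M]
  have zero: "(0, 0) \<in> M" using G(3)[OF G(5), of 0] by simp
  have sep: "a1 - norm (s1 - z) \<le> norm (s2 + z) - a2"
    if "(s1, a1) \<in> M" "(s2, a2) \<in> M" for s1 a1 s2 a2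
  proof -
    have "a1 + a2 \<le> norm (s1 + s2)" using G(4)[OF G(2)[OF that]] .
    also have "\<dots> \<le> norm (s1 - z) + norm (s2 + z)"
      using norm_triangle_ineq[of "s1 - z" "s2 + z"] by simp
    finally show ?thesis by simp
  qed
  define L where "L = (\<lambda>(s, a). a - norm (s - z)) ` M"
  have "bdd_above L" unfolding L_def using sep[OF _ zero] by (auto intro!: bdd_aboveI)
  moreover have "L \<noteq> {}" using zero unfolding L_def by blast
  ultimately show ?thesis
  proof (intro that[of "Sup L"])
    fix s a assume "(s, a) \<in> M"
    then show "a - norm (s - z) \<le> Sup L"
      using \<open>bdd_above L\<close> by (intro cSup_upper) (auto simp: L_def)
    show "Sup L \<le> norm (s + z) - a"
      using \<open>L \<noteq> {}\<close> sep[OF _ \<open>(s, a) \<in> M\<close>] by (intro cSup_least) (auto simp: L_def)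
  qed
qed

lemma norm_dominated_graph_extension_bound:
  assumes M: "norm_dominated_graph x0 M" and "(s, a) \<in> M"
    and lower: "\<And>s a. (s, a) \<in> M \<Longrightarrow> a - norm (s - z) \<le> c"
    and upper: "\<And>s a. (s, a) \<in> M \<Longrightarrow> c \<le> norm (s + z) - a"
  shows "a + t * c \<le> norm (s + t *\<^sub>R z)"
proof -
  note G = norm_dominated_graphD[OF M]
  consider "t = 0" | "t > 0" | "t < 0" by linarith
  then show ?thesis
  proof cases
    case 1
    then show ?thesis using G(4)[OF assms(2)] by simp
  next
    case 2
    have "c \<le> norm ((1/t) *\<^sub>R s + z) - (1/t) * a" using upper[OF G(3)[OF assms(2)]] .
    also have "(1/t) *\<^sub>R s + z = (1/t) *\<^sub>R (s + t *\<^sub>R z)" using 2 by (simp add: algebra_simps)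
    finally have "t * c \<le> t * ((1/t) * norm (s + t *\<^sub>R z) - (1/t) * a)"
      using 2 by (simp add: mult_left_mono)
    then show ?thesis using 2 by (simp add: algebra_simps)
  next
    case 3
    have "(-1/t) * a - norm ((-1/t) *\<^sub>R s - z) \<le> c" using lower[OF G(3)[OF assms(2)]] .
    also have "(-1/t) *\<^sub>R s - z = (-1/t) *\<^sub>R (s + t *\<^sub>R z)" using 3 by (simp add: algebra_simps)
    finally have "(-t) * ((-1/t) * a - (-1/t) * norm (s + t *\<^sub>R z)) \<le> (-t) * c"
      using 3 by (intro mult_left_mono) auto
    then show ?thesis using 3 by (simp add: algebra_simps)
  qed
qed

lemma norm_dominated_graph_extension_coordinate:
  assumes M: "norm_dominated_graph x0 M" and z: "\<And>a. (z, a) \<notin> M"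
    and "(s1, a1) \<in> M" "(s2, a2) \<in> M" "s1 + t1 *\<^sub>R z = s2 + t2 *\<^sub>R z"
  shows "t1 = t2" "a1 = a2"
proof -
  note G = norm_dominated_graphD[OF M]
  have diff: "(s1 - s2, a1 - a2) \<in> M"
    using G(2)[OF assms(3) G(3)[OF assms(4), of "-1"]] by simp
  show t: "t1 = t2"
  proof (rule ccontr)
    assume "t1 \<noteq> t2"
    moreover have "s1 - s2 = (t2 - t1) *\<^sub>R z" using assms(5) by (simp add: algebra_simps)
    ultimately have "(z, (1 / (t2 - t1)) * (a1 - a2)) \<in> M"
      using G(3)[OF diff, of "1 / (t2 - t1)"] by simp
    then show False using z by blast
  qed
  then show "a1 = a2" using G(1)[OF assms(3)] assms(4,5) by simp
qed

lemma norm_dominated_graph_extend: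
  assumes M: "norm_dominated_graph x0 M" and z: "\<And>a. (z, a) \<notin> M"
  obtains M' where "norm_dominated_graph x0 M'" "M \<subset> M'"
proof -
  note G = norm_dominated_graphD[OF M]
  obtain c where lower: "\<And>s a. (s, a) \<in> M \<Longrightarrow> a - norm (s - z) \<le> c"
    and upper: "\<And>s a. (s, a) \<in> M \<Longrightarrow> c \<le> norm (s + z) - a"
    using norm_dominated_graph_extension_constant[OF M] by metis
  define M' where "M' = {(s + t *\<^sub>R z, a + t * c) | s a t. (s, a) \<in> M}"
  have "M \<subseteq> M'" unfolding M'_def by force
  moreover have "(z, c) \<in> M' - M"
    unfolding M'_def using z G(3)[OF G(5), of 0] by force
  moreover have "norm_dominated_graph x0 M'"
    unfolding norm_dominated_graph_def
  proof (intro conjI allI impI)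
    fix x a b assume "(x, a) \<in> M'" "(x, b) \<in> M'"
    then obtain s1 a1 t1 s2 a2 t2 where "(s1, a1) \<in> M" "(s2, a2) \<in> M"
      "x = s1 + t1 *\<^sub>R z" "a = a1 + t1 * c" "x = s2 + t2 *\<^sub>R z" "b = a2 + t2 * c"
      unfolding M'_def by blast
    then show "a = b"
      using norm_dominated_graph_extension_coordinate[OF M z, of s1 a1 s2 a2 t1 t2] by simp
  next
    fix x a y b assume "(x, a) \<in> M'" "(y, b) \<in> M'"
    then obtain s1 a1 t1 s2 a2 t2 where "(s1, a1) \<in> M" "(s2, a2) \<in> M"
      "x = s1 + t1 *\<^sub>R z" "a = a1 + t1 * c" "y = s2 + t2 *\<^sub>R z" "b = a2 + t2 * c"
      unfolding M'_def by blast
    then have "(x + y, a + b) = ((s1 + s2) + (t1 + t2) *\<^sub>R z, (a1 + a2) + (t1 + t2) * c)"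
      "(s1 + s2, a1 + a2) \<in> M"
      using G(2) by (simp_all add: algebra_simps)
    then show "(x + y, a + b) \<in> M'" unfolding M'_def by blast
  next
    fix r x a assume "(x, a) \<in> M'"
    then obtain s a1 t where "(s, a1) \<in> M" "x = s + t *\<^sub>R z" "a = a1 + t * c"
      unfolding M'_def by blast
    then have "(r *\<^sub>R x, r * a) = (r *\<^sub>R s + (r * t) *\<^sub>R z, r * a1 + (r * t) * c)"
      "(r *\<^sub>R s, r * a1) \<in> M"
      using G(3) by (simp_all add: algebra_simps)
    then show "(r *\<^sub>R x, r * a) \<in> M'" unfolding M'_def by blast
  next
    fix x a assume "(x, a) \<in> M'"
    then show "a \<le> norm x"
      unfolding M'_def using norm_dominated_graph_extension_bound[OF M _ lower upper] by blast
  next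
    show "(x0, 1) \<in> M'" unfolding M'_def using G(5) by force
  qed
  ultimately show ?thesis using that by blast
qed

lemma real_norming_functional:
  fixes x0 :: "'a::real_normed_vector"
  assumes "norm x0 = 1"
  obtains f :: "'a \<Rightarrow> real" where "bounded_linear f" "f x0 = 1" "\<And>x. \<bar>f x\<bar> \<le> norm x"
proof -
  define A where "A = {G. norm_dominated_graph x0 G}"
  have "\<forall>C\<in>chains A. \<exists>U\<in>A. \<forall>X\<in>C. X \<subseteq> U"
  proof
    fix C assume C: "C \<in> chains A"
    show "\<exists>U\<in>A. \<forall>X\<in>C. X \<subseteq> U"
    proof (cases "C = {}")
      case True
      then show ?thesis using norm_dominated_graph_line[OF assms] unfolding A_def by blast
    next
      case False
      then show ?thesis
        using norm_dominated_graph_Union[OF False] C unfolding chains_def A_def by blast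
    qed
  qed
  then obtain M where "M \<in> A" and max: "\<forall>X\<in>A. M \<subseteq> X \<longrightarrow> X = M"
    using Zorn_Lemma2 by blast
  then have M: "norm_dominated_graph x0 M" unfolding A_def by simp
  note G = norm_dominated_graphD[OF M]
  have total: "\<exists>a. (z, a) \<in> M" for z
    using norm_dominated_graph_extend[OF M] max unfolding A_def by blast
  define f where "f x = (THE a. (x, a) \<in> M)" for x
  have graph: "(x, f x) \<in> M" for x
    unfolding f_def using total[of x] G(1) by (metis theI)
  have f_eq: "f x = a" if "(x, a) \<in> M" for x a using G(1)[OF that graph] by simp
  have add: "f (x + y) = f x + f y" and scale: "f (r *\<^sub>R x) = r * f x" for x y r
    using f_eq[OF G(2)[OF graph graph]] f_eq[OF G(3)[OF graph]] by simp_all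
  have abs_le: "\<bar>f x\<bar> \<le> norm x" for x
    using G(4)[OF graph, of x] G(4)[OF graph, of "-x"] scale[of "-1" x] by simp
  have "bounded_linear f"
    by (rule bounded_linear_intro[where K = 1]) (use add scale abs_le in auto)
  then show ?thesis using that f_eq[OF G(5)] abs_le by blast
qed

lemma norm_convex_combination_le:
  fixes a b :: "'a::real_normed_vector"
  assumes "norm a \<le> c" "norm b \<le> c" "0 \<le> l" "l \<le> 1"
  shows "norm (l *\<^sub>R a + (1 - l) *\<^sub>R b) \<le> c"
proof -
  have "norm (l *\<^sub>R a + (1 - l) *\<^sub>R b) \<le> l * norm a + (1 - l) * norm b"
    using norm_triangle_ineq[of "l *\<^sub>R a" "(1 - l) *\<^sub>R b"] assms(3,4) by simp
  also have "\<dots> \<le> l * c + (1 - l) * c" using assms by (intro add_mono mult_left_mono) auto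
  finally show ?thesis by (simp add: algebra_simps)
qed

lemma norm_convex_combination_ge:
  fixes a b :: "'a::real_normed_vector"
  assumes "0 \<le> l" "l \<le> 1"
  shows "(1 - l) * norm b - l * norm a \<le> norm (l *\<^sub>R a + (1 - l) *\<^sub>R b)"
  using norm_diff_ineq[of "(1 - l) *\<^sub>R b" "l *\<^sub>R a"] assms by (simp add: add.commute)

lemma norm_convex_combination_ge_one:
  fixes a b :: "'a::real_normed_vector"
  assumes "0 < l" "l < 1" "norm a \<le> 1" "norm b \<le> 1" "1 \<le> norm (l *\<^sub>R a + (1 - l) *\<^sub>R b)"
  shows "1 \<le> norm a"
proof -
  have "norm (l *\<^sub>R a + (1 - l) *\<^sub>R b) \<le> l * norm a + (1 - l) * norm b"
    using norm_triangle_ineq[of "l *\<^sub>R a" "(1 - l) *\<^sub>R b"] assms(1,2) by simp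
  also have "\<dots> \<le> l * norm a + (1 - l)" using assms(2,4) by (simp add: mult_left_le)
  finally have "l * 1 \<le> l * norm a" using assms(5) by linarith
  then show ?thesis using assms(1) by simp
qed

lemma bfun_bounded_linear: "bfun sc f \<Longrightarrow> bounded_linear f"
  unfolding bfun_def by blast

lemma bfun_sc: "bfun sc f \<Longrightarrow> f (sc c x) = c * f x"
  unfolding bfun_def by blast

lemma bfun_diff: "bfun sc f \<Longrightarrow> f (x - y) = f x - f y"
  using bfun_bounded_linear linear_diff bounded_linear.linear by metis

lemma bfun_mult_left: "bfun sc f \<Longrightarrow> bfun sc (\<lambda>x. a * f x)"
  unfolding bfun_def
  by (auto intro: bounded_linear_compose[OF bounded_linear_mult_right] simp: ac_simps)

lemma bfun_convex_combination:
  "bfun sc f \<Longrightarrow> bfun sc g \<Longrightarrow> bfun sc (\<lambda>x. l *\<^sub>R f x + m *\<^sub>R g x)"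
  unfolding bfun_def
  by (auto intro!: bounded_linear_add bounded_linear_compose[OF bounded_linear_scaleR_right]
           simp: distrib_left)

lemma bfun_comp_bop: "bfun sc h \<Longrightarrow> bop sc S \<Longrightarrow> bfun sc (\<lambda>x. h (S x))"
  unfolding bfun_def bop_def by (auto intro: bounded_linear_compose)

lemma bop_bounded_linear: "bop sc T \<Longrightarrow> bounded_linear T"
  unfolding bop_def by blast

lemma statesD:
  assumes "(x, f) \<in> states sc"
  shows "norm x = 1" "bfun sc f" "onorm f = 1" "f x = 1" "norm (f v) \<le> norm v"
  using assms onorm[OF bfun_bounded_linear, of sc f v] unfolding states_def by auto

lemma states_intro:
  assumes "norm x = 1" "bfun sc f" "f x = 1" "\<And>v. norm (f v) \<le> norm v"
  shows "(x, f) \<in> states sc"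
proof -
  have "onorm f \<le> 1" using assms(4) by (intro onorm_bound) auto
  moreover have "norm (f x) / norm x \<le> onorm f"
    using le_onorm[OF bfun_bounded_linear[OF assms(2)]] .
  ultimately show ?thesis using assms unfolding states_def by auto
qed

lemma states_normalize_functional:
  assumes "norm x = 1" "bfun sc f" "\<And>v. norm (f v) \<le> norm v" "norm (f x) = 1"
  shows "(x, \<lambda>v. inverse (f x) * f v) \<in> states sc"
proof -
  have "f x \<noteq> 0" using assms(4) by auto
  then show ?thesis
    using assms by (intro states_intro bfun_mult_left) (auto simp: norm_mult norm_inverse)
qed

lemma states_convex_combination:
  assumes "(x, f) \<in> states sc" "(x, g) \<in> states sc" "0 \<le> l" "l \<le> 1"
  shows "(x, \<lambda>v. l *\<^sub>R f v + (1 - l) *\<^sub>R g v) \<in> states sc"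
proof (rule states_intro)
  show "norm (l *\<^sub>R f v + (1 - l) *\<^sub>R g v) \<le> norm v" for v
    using assms by (intro norm_convex_combination_le statesD(5))
next
  show "bfun sc (\<lambda>v. l *\<^sub>R f v + (1 - l) *\<^sub>R g v)"
    using statesD(2)[OF assms(1)] statesD(2)[OF assms(2)] by (rule bfun_convex_combination)
  show "l *\<^sub>R f x + (1 - l) *\<^sub>R g x = 1"
    using statesD(4)[OF assms(1)] statesD(4)[OF assms(2)] by (simp add: scaleR_conv_of_real)
qed (use statesD(1)[OF assms(1)] in simp)

definition rank_one :: "('k \<Rightarrow> 'a \<Rightarrow> 'a) \<Rightarrow> ('a \<Rightarrow> 'k) \<Rightarrow> 'a \<Rightarrow> 'a \<Rightarrow> 'a" where
  "rank_one sc \<phi> u x = sc (\<phi> x) u"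

lemma bfun_rank_one: "bfun sc f \<Longrightarrow> f (rank_one sc \<phi> u x) = \<phi> x * f u"
  unfolding rank_one_def by (rule bfun_sc)

lemma norm_rank_one_attained:
  assumes "(x, f) \<in> states sc" "bfun sc \<phi>" "\<And>v. norm (\<phi> v) \<le> norm v" "norm u = 1"
    and "norm (f (rank_one sc \<phi> u x)) = 1"
  shows "norm (\<phi> x) = 1" "norm (f u) = 1"
proof -
  have "norm (\<phi> x) * norm (f u) = 1"
    using assms(5) bfun_rank_one[OF statesD(2)[OF assms(1)]] by (simp add: norm_mult)
  moreover have "norm (\<phi> x) \<le> 1" "norm (f u) \<le> 1"
    using assms(3)[of x] statesD(1)[OF assms(1)] statesD(5)[OF assms(1), of u] assms(4) by auto
  ultimately show "norm (\<phi> x) = 1" "norm (f u) = 1"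
    using mult_left_le[of "norm (f u)" "norm (\<phi> x)"] mult_left_le_one_le[of "norm (f u)" "norm (\<phi> x)"]
    by auto
qed

lemma norm_state_apply_le_onorm:
  "bounded_linear T \<Longrightarrow> (x, f) \<in> states sc \<Longrightarrow> norm (f (T x)) \<le> onorm T"
  using statesD(1)[of x f sc] statesD(5)[of x f sc "T x"] onorm[of T x] by auto

lemma numrad_ge:
  assumes "bounded_linear T" "(x, f) \<in> states sc"
  shows "norm (f (T x)) \<le> numrad sc T"
proof -
  have "bdd_above ((\<lambda>p. norm (snd p (T (fst p)))) ` states sc)"
    using norm_state_apply_le_onorm[OF assms(1)] by (auto intro!: bdd_aboveI[of _ "onorm T"])
  from cSUP_upper[OF assms(2) this] show ?thesis unfolding numrad_def by simp
qed

lemma numrad_le: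
  assumes "states sc \<noteq> {}" "\<And>x f. (x, f) \<in> states sc \<Longrightarrow> norm (f (T x)) \<le> a"
  shows "numrad sc T \<le> a"
  unfolding numrad_def using assms by (auto intro!: cSUP_least)

lemma numrad_le_onorm: "bounded_linear T \<Longrightarrow> states sc \<noteq> {} \<Longrightarrow> numrad sc T \<le> onorm T"
  by (rule numrad_le) (auto intro: norm_state_apply_le_onorm)

lemma numrad_nonneg:
  assumes "bounded_linear T" "states sc \<noteq> {}"
  shows "0 \<le> numrad sc T"
proof -
  obtain x f where "(x, f) \<in> states sc" using assms(2) by auto
  then show ?thesis using numrad_ge[OF assms(1)] norm_ge_zero order_trans by metis
qed

lemma numrad_approx:
  assumes "states sc \<noteq> {}" "a < numrad sc T"
  obtains x f where "(x, f) \<in> states sc" "a < norm (f (T x))"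
  using numrad_le[OF assms(1), of T a] assms(2) that by (meson not_le)

lemma numidx_le_numrad:
  assumes "states sc \<noteq> {}" "bop sc T" "onorm T = 1"
  shows "numidx sc \<le> numrad sc T"
proof -
  have "bdd_below (numrad sc ` {T. bop sc T \<and> onorm T = 1})"
    using numrad_nonneg[OF _ assms(1)] by (auto intro!: bdd_belowI[of _ 0] dest: bop_bounded_linear)
  then show ?thesis unfolding numidx_def using assms(2,3) by (auto intro: cINF_lower)
qed

(* A state attaining the numerical radius of this rank-one operator sees |f| = 1, which cannot
   happen near the zero y of f. *)
lemma rank_one_convex_combination_attained_far:
  assumes "(w, f) \<in> states sc" "(y, g) \<in> states sc" "f y = 0" "0 < l" "l < 1"
    and "(x, h) \<in> states sc" "norm (h (rank_one sc (\<lambda>v. l *\<^sub>R f v + (1 - l) *\<^sub>R g v) y x)) = 1"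
  shows "1 \<le> norm (x - y)"
proof -
  have "bfun sc (\<lambda>v. l *\<^sub>R f v + (1 - l) *\<^sub>R g v)"
    using statesD(2)[OF assms(1)] statesD(2)[OF assms(2)] by (rule bfun_convex_combination)
  moreover have "norm (l *\<^sub>R f v + (1 - l) *\<^sub>R g v) \<le> norm v" for v
    using assms by (intro norm_convex_combination_le statesD(5)) auto
  ultimately have "norm (l *\<^sub>R f x + (1 - l) *\<^sub>R g x) = 1"
    using norm_rank_one_attained(1)[OF assms(6) _ _ statesD(1)[OF assms(2)] assms(7)] by blast
  moreover have "norm (f x) \<le> 1" "norm (g x) \<le> 1"
    using statesD(5)[OF assms(1), of x] statesD(5)[OF assms(2), of x] statesD(1)[OF assms(6)] by auto
  ultimately have "1 \<le> norm (f x)"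
    using norm_convex_combination_ge_one[OF assms(4,5), of "f x" "g x"] by simp
  also have "f x = f (x - y)" using bfun_diff[OF statesD(2)[OF assms(1)]] assms(3) by simp
  also have "norm \<dots> \<le> norm (x - y)" using statesD(5)[OF assms(1)] .
  finally show ?thesis .
qed

(* Covers the real and the complex case at once; exists_state is the Hahn-Banach theorem. *)
locale normed_space_with_states =
  fixes sc :: "'k::real_normed_field \<Rightarrow> 'a::real_normed_vector \<Rightarrow> 'a"
  assumes sc_of_real: "\<And>r x. sc (of_real r) x = r *\<^sub>R x"
    and sc_mult: "\<And>a b x. sc (a * b) x = sc a (sc b x)"
    and sc_add_left: "\<And>a b x. sc (a + b) x = sc a x + sc b x"
    and norm_sc: "\<And>a x. norm (sc a x) = norm a * norm x"
    and exists_state: "\<And>x. norm x = 1 \<Longrightarrow> \<exists>f. (x, f) \<in> states sc"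
begin

lemma sc_one [simp]: "sc 1 x = x"
  using sc_of_real[of 1 x] by simp

lemma sc_zero_left [simp]: "sc 0 x = 0"
  using sc_of_real[of 0 x] by simp

lemma sc_scaleR: "sc a (r *\<^sub>R x) = r *\<^sub>R sc a x"
  by (metis mult.commute sc_mult sc_of_real)

lemma states_nonempty:
  assumes "\<exists>x::'a. x \<noteq> 0"
  shows "states sc \<noteq> {}"
proof -
  obtain x :: 'a where "x \<noteq> 0" using assms by blast
  then show ?thesis using exists_state[of "(1 / norm x) *\<^sub>R x"] by auto
qed

lemma states_normalize_vector:
  assumes "(x, f) \<in> states sc" "norm y = 1" "norm (f y) = 1"
  shows "(sc (inverse (f y)) y, f) \<in> states sc"
proof (rule states_intro)
  have "f y \<noteq> 0" using assms(3) by auto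
  then show "f (sc (inverse (f y)) y) = 1" using bfun_sc[OF statesD(2)[OF assms(1)]] by simp
  show "norm (sc (inverse (f y)) y) = 1" using assms(2,3) by (simp add: norm_sc norm_inverse)
qed (use statesD[OF assms(1)] in auto)

lemma bop_rank_one:
  assumes "bfun sc \<phi>"
  shows "bop sc (rank_one sc \<phi> u)"
proof -
  interpret \<phi>: bounded_linear \<phi> using bfun_bounded_linear[OF assms] .
  obtain K where K: "\<And>x. norm (\<phi> x) \<le> norm x * K" using \<phi>.bounded by blast
  have "bounded_linear (rank_one sc \<phi> u)"
  proof (rule bounded_linear_intro)
    fix x y show "rank_one sc \<phi> u (x + y) = rank_one sc \<phi> u x + rank_one sc \<phi> u y"
      by (simp add: rank_one_def \<phi>.add sc_add_left)
  next
    fix r x show "rank_one sc \<phi> u (r *\<^sub>R x) = r *\<^sub>R rank_one sc \<phi> u x"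
      by (simp add: rank_one_def \<phi>.scale scaleR_conv_of_real sc_mult sc_of_real)
  next
    fix x show "norm (rank_one sc \<phi> u x) \<le> norm x * (K * norm u)"
      using mult_right_mono[OF K[of x] norm_ge_zero[of u]] by (simp add: rank_one_def norm_sc ac_simps)
  qed
  then show ?thesis
    unfolding bop_def using bfun_sc[OF assms] by (simp add: rank_one_def sc_mult)
qed

lemma onorm_rank_one:
  assumes "bfun sc \<phi>" "norm u = 1"
  shows "onorm (rank_one sc \<phi> u) = onorm \<phi>"
proof -
  have "norm (rank_one sc \<phi> u x) = norm (\<phi> x)" for x
    using assms(2) by (simp add: rank_one_def norm_sc)
  then show ?thesis unfolding onorm_def by simp
qed

lemma numrad_eq_onorm:
  assumes "\<exists>x::'a. x \<noteq> 0" "numidx sc = 1" "bop sc T"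
  shows "numrad sc T = onorm T"
proof -
  have st: "states sc \<noteq> {}" using states_nonempty[OF assms(1)] .
  have T: "bounded_linear T" using bop_bounded_linear[OF assms(3)] .
  have "onorm T \<le> numrad sc T"
  proof (cases "onorm T = 0")
    case True
    then show ?thesis using numrad_nonneg[OF T st] by simp
  next
    case False
    then have pos: "0 < onorm T" using onorm_pos_le[OF T] by simp
    define T' where "T' x = (1 / onorm T) *\<^sub>R T x" for x
    have T': "bounded_linear T'"
      unfolding T'_def by (rule bounded_linear_compose[OF bounded_linear_scaleR_right T])
    then have "bop sc T'"
      using bop_def assms(3) sc_scaleR by (auto simp: bop_def T'_def)
    moreover have "onorm T' = 1"
      unfolding T'_def using onorm_scaleR[OF T, of "1 / onorm T"] pos by simp
    ultimately have "1 \<le> numrad sc T'" using numidx_le_numrad[OF st] assms(2) by metis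
    also have "numrad sc T' \<le> numrad sc T / onorm T"
    proof (rule numrad_le[OF st])
      fix x f assume xf: "(x, f) \<in> states sc"
      have "f (T' x) = (1 / onorm T) *\<^sub>R f (T x)"
        unfolding T'_def using bfun_bounded_linear[OF statesD(2)[OF xf]]
        by (simp add: linear_scale bounded_linear.linear)
      then show "norm (f (T' x)) \<le> numrad sc T / onorm T"
        using numrad_ge[OF T xf] pos by (simp add: divide_right_mono)
    qed
    finally show ?thesis using pos by (simp add: field_simps)
  qed
  then show ?thesis using numrad_le_onorm[OF T st] by simp
qed

lemma numrad_rank_one:
  assumes "\<exists>x::'a. x \<noteq> 0" "numidx sc = 1" "(x, f) \<in> states sc" "norm u = 1"
  shows "numrad sc (rank_one sc f u) = 1"
  using numrad_eq_onorm[OF assms(1,2) bop_rank_one] onorm_rank_one[OF _ assms(4)] statesD[OF assms(3)]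
  by simp

lemma exists_state_annihilating_unit_vector:
  assumes "\<exists>x::'a. x \<noteq> 0" "\<not> one_dim sc"
  obtains x0 f0 y where "(x0, f0) \<in> states sc" "norm y = 1" "f0 y = 0"
proof -
  obtain x :: 'a where "x \<noteq> 0" using assms(1) by blast
  then obtain f0 where st: "((1 / norm x) *\<^sub>R x, f0) \<in> states sc"
    using exists_state[of "(1 / norm x) *\<^sub>R x"] by auto
  define x0 where "x0 = (1 / norm x) *\<^sub>R x"
  have "x0 \<noteq> 0" using statesD(1)[OF st] x0_def by auto
  then obtain w where w: "\<And>c. w \<noteq> sc c x0" using assms(2) unfolding one_dim_def by blast
  define y where "y = w - sc (f0 w) x0"
  have "y \<noteq> 0" using w[of "f0 w"] y_def by auto
  have "f0 y = 0"
    using bfun_diff[OF statesD(2)[OF st]] bfun_sc[OF statesD(2)[OF st]] statesD(4)[OF st]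
    by (simp add: y_def x0_def)
  then have "f0 ((1 / norm y) *\<^sub>R y) = 0"
    using bfun_sc[OF statesD(2)[OF st], of "of_real (1 / norm y)" y] unfolding sc_of_real by simp
  then show ?thesis using that[OF st, of "(1 / norm y) *\<^sub>R y"] \<open>y \<noteq> 0\<close> by simp
qed

lemma rank_one_nearly_attained:
  assumes "\<exists>x::'a. x \<noteq> 0" "numidx sc = 1" "(x0, f0) \<in> states sc" "norm u = 1" "0 < d"
  obtains z h where "(z, h) \<in> states sc" "1 - d < norm (f0 z) * norm (h u)"
    "1 - d < norm (f0 z)" "1 - d < norm (h u)"
proof -
  have "1 - d < numrad sc (rank_one sc f0 u)"
    using numrad_rank_one[OF assms(1-4)] assms(5) by simp
  then obtain z h where zh: "(z, h) \<in> states sc" "1 - d < norm (h (rank_one sc f0 u z))"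
    using numrad_approx[OF states_nonempty[OF assms(1)]] by blast
  then have prod: "1 - d < norm (f0 z) * norm (h u)"
    using bfun_rank_one[OF statesD(2)[OF zh(1)]] by (simp add: norm_mult)
  have "norm (f0 z) \<le> 1" "norm (h u) \<le> 1"
    using statesD(5)[OF assms(3), of z] statesD(1)[OF zh(1)] statesD(5)[OF zh(1), of u] assms(4)
    by auto
  then have "norm (f0 z) * norm (h u) \<le> norm (f0 z)" "norm (f0 z) * norm (h u) \<le> norm (h u)"
    by (simp_all add: mult_left_le mult_left_le_one_le)
  then show ?thesis using that zh(1) prod by simp
qed

lemma BPBop_nu_configuration:
  assumes "\<exists>x::'a. x \<noteq> 0" "numidx sc = 1" "\<not> one_dim sc" "BPBop_nu sc"
  obtains w y f g where "(w, f) \<in> states sc" "(w, g) \<in> states sc" "(y, g) \<in> states sc" "f y = 0"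
proof -
  obtain x0 f0 y where st0: "(x0, f0) \<in> states sc" and y: "norm y = 1" "f0 y = 0"
    using exists_state_annihilating_unit_vector[OF assms(1,3)] by blast
  obtain \<eta> where "\<eta> > 0" and H: "\<And>T x f. bop sc T \<Longrightarrow> numrad sc T = 1 \<Longrightarrow> (x, f) \<in> states sc
      \<Longrightarrow> 1 - \<eta> < norm (f (T x)) \<Longrightarrow> \<exists>y g. (y, g) \<in> states sc \<and> norm (g (T y)) = 1 \<and>
      norm (y - x) < 1 \<and> onorm (\<lambda>v. g v - f v) < 1"
    using assms(4)[unfolded BPBop_nu_def, THEN spec, of 1] by auto
  then obtain z h where zh: "(z, h) \<in> states sc" "1 - \<eta> < norm (f0 z) * norm (h y)"
    using rank_one_nearly_attained[OF assms(1,2) st0 y(1)] by metis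
  then have "1 - \<eta> < norm (h (rank_one sc f0 y z))"
    using bfun_rank_one[OF statesD(2)[OF zh(1)]] by (simp add: norm_mult)
  then obtain w g where wg: "(w, g) \<in> states sc" "norm (g (rank_one sc f0 y w)) = 1"
    using H[OF bop_rank_one[OF statesD(2)[OF st0]] numrad_rank_one[OF assms(1,2) st0 y(1)] zh(1)]
    by blast
  note attained = norm_rank_one_attained[OF wg(1) statesD(2,5)[OF st0] y(1) wg(2)]
  have "(w, \<lambda>v. inverse (f0 w) * f0 v) \<in> states sc"
    using statesD[OF wg(1)] statesD[OF st0] attained(1) by (intro states_normalize_functional) auto
  moreover have "(sc (inverse (g y)) y, g) \<in> states sc"
    using states_normalize_vector[OF wg(1) y(1) attained(2)] .
  moreover have "inverse (f0 w) * f0 (sc (inverse (g y)) y) = 0"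
    using bfun_sc[OF statesD(2)[OF st0]] y(2) by simp
  ultimately show ?thesis using that wg(1) by blast
qed

theorem one_dim_if_BPBop_nu:
  assumes "\<exists>x::'a. x \<noteq> 0" "numidx sc = 1" "BPBop_nu sc"
  shows "one_dim sc"
proof (rule ccontr)
  assume "\<not> one_dim sc"
  then obtain w y f g where wf: "(w, f) \<in> states sc" and wg: "(w, g) \<in> states sc"
    and yg: "(y, g) \<in> states sc" and fy: "f y = 0"
    by (rule BPBop_nu_configuration[OF assms(1,2) _ assms(3)])
  obtain \<eta> where "\<eta> > 0" and H: "\<And>T x f. bop sc T \<Longrightarrow> numrad sc T = 1 \<Longrightarrow> (x, f) \<in> states sc
      \<Longrightarrow> 1 - \<eta> < norm (f (T x)) \<Longrightarrow> \<exists>x' h. (x', h) \<in> states sc \<and> norm (h (T x')) = 1 \<and>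
      norm (x' - x) < 1/2 \<and> onorm (\<lambda>v. h v - f v) < 1/2"
    using assms(3)[unfolded BPBop_nu_def, THEN spec, of "1/2"] by auto
  define l where "l = min \<eta> 1 / 2"
  have l: "0 < l" "l < 1" "1 - \<eta> < 1 - l" using \<open>\<eta> > 0\<close> by (auto simp: l_def)
  define \<phi> where "\<phi> v = l *\<^sub>R f v + (1 - l) *\<^sub>R g v" for v
  have "(w, \<phi>) \<in> states sc"
    unfolding \<phi>_def using l by (intro states_convex_combination[OF wf wg]) auto
  note T = bop_rank_one[OF statesD(2)[OF this]] numrad_rank_one[OF assms(1,2) this statesD(1)[OF yg]]
  have "g (rank_one sc \<phi> y y) = of_real (1 - l)"
    using bfun_rank_one[OF statesD(2)[OF yg]] statesD(4)[OF yg] fy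
    by (simp add: \<phi>_def scaleR_conv_of_real)
  then have "1 - \<eta> < norm (g (rank_one sc \<phi> y y))" using l by (simp only: norm_of_real)
  then obtain x h where "(x, h) \<in> states sc" "norm (h (rank_one sc \<phi> y x)) = 1" "norm (x - y) < 1/2"
    using H[OF T yg] by blast
  then show False
    using rank_one_convex_combination_attained_far[OF wf yg fy l(1,2), of x h]
    unfolding \<phi>_def by simp
qed

lemma BPBpp_nu_configuration:
  assumes "\<exists>x::'a. x \<noteq> 0" "numidx sc = 1" "\<not> one_dim sc" "BPBpp_nu sc" "0 < \<epsilon>" "0 < \<delta>"
  obtains z h \<phi> y where "(z, h) \<in> states sc" "(z, \<phi>) \<in> states sc" "norm y = 1"
    "norm (\<phi> y) < \<epsilon>" "1 - \<delta> < norm (h y)"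
proof -
  obtain x0 f0 y where st0: "(x0, f0) \<in> states sc" and y: "norm y = 1" "f0 y = 0"
    by (rule exists_state_annihilating_unit_vector[OF assms(1,3)])
  obtain \<eta> where "\<eta> > 0" and H: "\<And>T x f. bop sc T \<Longrightarrow> numrad sc T = 1 \<Longrightarrow> (x, f) \<in> states sc
      \<Longrightarrow> 1 - \<eta> < norm (f (T x)) \<Longrightarrow>
      \<exists>S. bop sc S \<and> numrad sc S = 1 \<and> norm (f (S x)) = 1 \<and> onorm (\<lambda>v. S v - T v) < \<epsilon>"
    using assms(4)[unfolded BPBpp_nu_def, THEN spec, of \<epsilon>] assms(5) by auto
  obtain z h where zh: "(z, h) \<in> states sc" "1 - min \<delta> \<eta> < norm (f0 z) * norm (h y)"
    "1 - min \<delta> \<eta> < norm (f0 z)" "1 - min \<delta> \<eta> < norm (h y)"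
    by (rule rank_one_nearly_attained[OF assms(1,2) st0 y(1), of "min \<delta> \<eta>"]) (use assms(6) \<open>\<eta> > 0\<close> in simp)
  note T = bop_rank_one[OF statesD(2)[OF st0]] numrad_rank_one[OF assms(1,2) st0 statesD(1)[OF zh(1)]]
  have "h (rank_one sc f0 z z) = f0 z"
    using bfun_rank_one[OF statesD(2)[OF zh(1)]] statesD(4)[OF zh(1)] by simp
  then have "1 - \<eta> < norm (h (rank_one sc f0 z z))" using zh(3) by simp
  then obtain S where S: "bop sc S" "numrad sc S = 1" "norm (h (S z)) = 1"
    "onorm (\<lambda>v. S v - rank_one sc f0 z v) < \<epsilon>"
    using H[OF T zh(1)] by blast
  have S_le: "norm (S v) \<le> norm v" for v
    using onorm[OF bop_bounded_linear[OF S(1)], of v] numrad_eq_onorm[OF assms(1,2) S(1)] S(2)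
    by simp
  have "(z, \<lambda>v. inverse (h (S z)) * h (S v)) \<in> states sc"
    using statesD(1,2)[OF zh(1)] bfun_comp_bop[OF _ S(1)] S(3) S_le
      order_trans[OF statesD(5)[OF zh(1)] S_le]
    by (intro states_normalize_functional) auto
  moreover have "norm (inverse (h (S z)) * h (S y)) < \<epsilon>"
  proof -
    have "norm (inverse (h (S z)) * h (S y)) \<le> norm (S y - rank_one sc f0 z y)"
      using statesD(5)[OF zh(1), of "S y"] S(3) y(2) by (simp add: norm_mult norm_inverse rank_one_def)
    also have "\<dots> \<le> onorm (\<lambda>v. S v - rank_one sc f0 z v) * norm y"
      using onorm[OF bounded_linear_sub[OF bop_bounded_linear[OF S(1)] bop_bounded_linear[OF T(1)]]]
      by simp
    finally show ?thesis using S(4) y(1) by simp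
  qed
  ultimately show ?thesis using that zh(1,4) y(1) \<open>\<eta> > 0\<close> by auto
qed

(* S attains its numerical radius at the state (z, l phi + (1 - l) h) only if |phi (S z)| = 1,
   whereas the rank-one operator maps z to y, where phi is small. *)
lemma rank_one_far_from_attaining_operators:
  assumes "(z, h) \<in> states sc" "(z, \<phi>) \<in> states sc" "norm y = 1" "0 < l" "l < 1"
    and "bop sc S" "onorm S \<le> 1" "norm (l *\<^sub>R \<phi> (S z) + (1 - l) *\<^sub>R h (S z)) = 1"
  shows "1 - norm (\<phi> y) \<le> onorm (\<lambda>x. S x - rank_one sc h y x)"
proof -
  have Sz: "norm (S z) \<le> 1"
    using onorm[OF bop_bounded_linear[OF assms(6)], of z] assms(7) statesD(1)[OF assms(1)]
    by (simp add: order_trans)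
  have "1 \<le> norm (\<phi> (S z))"
    by (rule norm_convex_combination_ge_one[OF assms(4,5) order_trans[OF statesD(5)[OF assms(2)] Sz]
          order_trans[OF statesD(5)[OF assms(1)] Sz]]) (use assms(8) in simp)
  also have "\<phi> (S z) = \<phi> (S z - rank_one sc h y z) + \<phi> y"
    using bfun_diff[OF statesD(2)[OF assms(2)]] statesD(4)[OF assms(1)] by (simp add: rank_one_def)
  also have "norm \<dots> \<le> norm (S z - rank_one sc h y z) + norm (\<phi> y)"
    using norm_triangle_ineq statesD(5)[OF assms(2)] by (metis add_right_mono order_trans)
  also have "norm (S z - rank_one sc h y z) \<le> onorm (\<lambda>x. S x - rank_one sc h y x)"
    using onorm[OF bounded_linear_sub[OF bop_bounded_linear[OF assms(6)]
          bop_bounded_linear[OF bop_rank_one[OF statesD(2)[OF assms(1)]]]], of z]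
      statesD(1)[OF assms(1)] by simp
  finally show ?thesis by simp
qed

theorem one_dim_if_BPBpp_nu:
  assumes "\<exists>x::'a. x \<noteq> 0" "numidx sc = 1" "BPBpp_nu sc"
  shows "one_dim sc"
proof (rule ccontr)
  assume nd: "\<not> one_dim sc"
  obtain \<eta> where "\<eta> > 0" and H: "\<And>T x f. bop sc T \<Longrightarrow> numrad sc T = 1 \<Longrightarrow> (x, f) \<in> states sc
      \<Longrightarrow> 1 - \<eta> < norm (f (T x)) \<Longrightarrow>
      \<exists>S. bop sc S \<and> numrad sc S = 1 \<and> norm (f (S x)) = 1 \<and> onorm (\<lambda>v. S v - T v) < 1/4"
    using assms(3)[unfolded BPBpp_nu_def, THEN spec, of "1/4"] by auto
  define l where "l = min \<eta> (1/2) / 4"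
  have l: "0 < l" "l < 1" "l \<le> \<eta> / 4" using \<open>\<eta> > 0\<close> by (auto simp: l_def)
  obtain z h \<phi> y where zh: "(z, h) \<in> states sc" and z\<phi>: "(z, \<phi>) \<in> states sc" and y: "norm y = 1"
    and \<phi>y: "norm (\<phi> y) < 1/4" and hy: "1 - l < norm (h y)"
    by (rule BPBpp_nu_configuration[OF assms(1,2) nd assms(3), of "1/4" l]) (use l in auto)
  define f where "f v = l *\<^sub>R \<phi> v + (1 - l) *\<^sub>R h v" for v
  have zf: "(z, f) \<in> states sc"
    unfolding f_def using l by (intro states_convex_combination[OF z\<phi> zh]) auto
  note T = bop_rank_one[OF statesD(2)[OF zh]] numrad_rank_one[OF assms(1,2) zh y]
  have "(1 - l) * norm (h y) - l * norm (\<phi> y) \<le> norm (f (rank_one sc h y z))"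
    using norm_convex_combination_ge[of l "h y" "\<phi> y"] l
      bfun_rank_one[OF statesD(2)[OF zf]] statesD(4)[OF zh]
    by (simp add: f_def)
  moreover have "1 - \<eta> < (1 - l) * norm (h y) - l * norm (\<phi> y)"
  proof -
    have "(1 - l) * (1 - l) < (1 - l) * norm (h y)" "l * norm (\<phi> y) \<le> l * (1/4)"
      using hy \<phi>y l by (auto intro: mult_strict_left_mono mult_left_mono)
    moreover have "1 - \<eta> \<le> (1 - l) * (1 - l) - l * (1/4)"
      using l by (simp add: algebra_simps) (smt (verit) mult_nonneg_nonneg)
    ultimately show ?thesis by linarith
  qed
  ultimately obtain S where S: "bop sc S" "numrad sc S = 1" "norm (f (S z)) = 1"
    "onorm (\<lambda>v. S v - rank_one sc h y v) < 1/4"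
    using H[OF T zf] by fastforce
  have "1 - norm (\<phi> y) \<le> onorm (\<lambda>v. S v - rank_one sc h y v)"
    using rank_one_far_from_attaining_operators[OF zh z\<phi> y l(1,2) S(1)] S(3)
      numrad_eq_onorm[OF assms(1,2) S(1)] S(2)
    by (simp add: f_def)
  then show False using S(4) \<phi>y by simp
qed

lemma numrad_eq_if_one_dim:
  assumes "one_dim sc" "bop sc T" "(x, f) \<in> states sc"
  shows "norm (f (T x)) = numrad sc T"
proof -
  obtain e where e: "\<And>x. \<exists>c. x = sc c e" using assms(1) unfolding one_dim_def by blast
  obtain a where a: "T e = sc a e" using e by blast
  have const: "g (T y) = a" if "(y, g) \<in> states sc" for y g
  proof -
    obtain c where c: "y = sc c e" using e by blast
    have "T y = sc a y"
      unfolding c using bfun_sc bop_def assms(2) a by (metis mult.commute sc_mult)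
    then show ?thesis using bfun_sc[OF statesD(2)[OF that]] statesD(4)[OF that] by simp
  qed
  have "numrad sc T = (SUP p\<in>states sc. norm a)"
    unfolding numrad_def by (rule SUP_cong) (auto simp: const)
  also have "\<dots> = norm a" using assms(3) by (intro cSUP_const) auto
  finally show ?thesis using const[OF assms(3)] by simp
qed

lemma BPBpp_nu_if_one_dim:
  assumes "one_dim sc"
  shows "BPBpp_nu sc"
  unfolding BPBpp_nu_def
proof (intro allI impI exI[of _ 1] conjI)
  fix \<epsilon> :: real and T x f
  assume "0 < \<epsilon>" and "bop sc T \<and> numrad sc T = 1 \<and> (x, f) \<in> states sc \<and> 1 - 1 < norm (f (T x))"
  then show "\<exists>S. bop sc S \<and> numrad sc S = 1 \<and> norm (f (S x)) = 1 \<and> onorm (\<lambda>z. S z - T z) < \<epsilon>"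
    using numrad_eq_if_one_dim[OF assms] by (intro exI[of _ T]) (simp add: onorm_zero)
qed simp

lemma BPBop_nu_if_one_dim:
  assumes "one_dim sc"
  shows "BPBop_nu sc"
  unfolding BPBop_nu_def
proof (intro allI impI exI[of _ 1] conjI)
  fix \<epsilon> :: real and T x f
  assume "0 < \<epsilon>" and "bop sc T \<and> numrad sc T = 1 \<and> (x, f) \<in> states sc \<and> 1 - 1 < norm (f (T x))"
  then show "\<exists>y g. (y, g) \<in> states sc \<and> norm (g (T y)) = 1 \<and> norm (y - x) < \<epsilon> \<and>
      onorm (\<lambda>z. g z - f z) < \<epsilon>"
    using numrad_eq_if_one_dim[OF assms] by (intro exI[of _ x] exI[of _ f]) (simp add: onorm_zero)
qed simp

theorem BPB_nu_iff_one_dim: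
  assumes "\<exists>x::'a. x \<noteq> 0" "numidx sc = 1"
  shows "(BPBpp_nu sc \<longleftrightarrow> BPBop_nu sc) \<and> (BPBop_nu sc \<longleftrightarrow> one_dim sc)"
  using one_dim_if_BPBpp_nu[OF assms] one_dim_if_BPBop_nu[OF assms]
    BPBpp_nu_if_one_dim BPBop_nu_if_one_dim by blast

end

lemma normed_space_with_states_real:
  "normed_space_with_states (scaleR :: real \<Rightarrow> 'a::real_normed_vector \<Rightarrow> 'a)"
proof
  fix x :: 'a
  assume "norm x = 1"
  moreover obtain f :: "'a \<Rightarrow> real" where "bounded_linear f" "f x = 1" "\<And>v. \<bar>f v\<bar> \<le> norm v"
    using real_norming_functional[OF \<open>norm x = 1\<close>] by blast
  moreover have "bfun scaleR f"
    using \<open>bounded_linear f\<close> unfolding bfun_def by (simp add: linear_scale bounded_linear.linear)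
  ultimately show "\<exists>f. (x, f) \<in> states scaleR" by (intro exI[of _ f] states_intro) auto
qed (simp_all add: scaleR_add_left)

definition complexify :: "(complex \<Rightarrow> 'a \<Rightarrow> 'a) \<Rightarrow> ('a \<Rightarrow> real) \<Rightarrow> 'a \<Rightarrow> complex" where
  "complexify scC f x = complex_of_real (f x) - \<i> * complex_of_real (f (scC \<i> x))"

context
  fixes scC :: "complex \<Rightarrow> 'a::real_normed_vector \<Rightarrow> 'a"
  assumes scC: "complex_normed_structure scC"
begin

lemma complex_normed_structureD:
  "scC (complex_of_real r) x = r *\<^sub>R x" "scC (a * b) x = scC a (scC b x)"
  "scC (a + b) x = scC a x + scC b x" "scC a (x + y) = scC a x + scC a y"
  "norm (scC a x) = cmod a * norm x"
  using scC unfolding complex_normed_structure_def by blast+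

lemma scC_decompose: "scC c x = Re c *\<^sub>R x + Im c *\<^sub>R scC \<i> x"
proof -
  have "c = complex_of_real (Re c) + complex_of_real (Im c) * \<i>" by (simp add: complex_eq_iff)
  then show ?thesis by (metis complex_normed_structureD(1-3))
qed

lemma scC_scaleR: "scC a (r *\<^sub>R x) = r *\<^sub>R scC a x"
  by (metis complex_normed_structureD(1,2) mult.commute)

lemma complexify_scC:
  assumes "linear f"
  shows "complexify scC f (scC c x) = c * complexify scC f x"
proof -
  have ii: "scC \<i> (scC \<i> x) = - x" for x
    using complex_normed_structureD(2)[of \<i> \<i> x] complex_normed_structureD(1)[of "-1" x] by simp
  have "complexify scC f (scC c x) =
      Re c * complexify scC f x + Im c * complexify scC f (scC \<i> x)"
    unfolding complexify_def scC_decompose[of c x]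
    using linear_add[OF assms] linear_scale[OF assms]
    by (simp add: complex_normed_structureD(4) scC_scaleR algebra_simps)
  also have "complexify scC f (scC \<i> x) = \<i> * complexify scC f x"
    unfolding complexify_def ii using linear_neg[OF assms] by (simp add: algebra_simps)
  finally show ?thesis by (simp add: complex_eq_iff algebra_simps)
qed

lemma norm_complexify_le:
  assumes "linear f" "\<And>x. f x \<le> norm x"
  shows "cmod (complexify scC f x) \<le> norm x"
proof (cases "complexify scC f x = 0")
  case False
  \<comment> \<open>rotate x by a unimodular c so that the value becomes real and positive\<close>
  define c where "c = cnj (complexify scC f x) / cmod (complexify scC f x)"
  have "c * complexify scC f x = cmod (complexify scC f x)"
    unfolding c_def using False complex_norm_square[of "complexify scC f x"]
    by (simp add: power2_eq_square field_simps)
  then have "cmod (complexify scC f x) = f (scC c x)"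
    using complexify_scC[OF assms(1), of c x] by (simp add: complexify_def complex_eq_iff)
  also have "\<dots> \<le> norm (scC c x)" by (rule assms(2))
  also have "\<dots> = norm x"
    using False complex_normed_structureD(5) by (simp add: c_def norm_divide)
  finally show ?thesis .
qed simp

lemma normed_space_with_states_complex: "normed_space_with_states scC"
proof
  fix x0 :: 'a
  assume "norm x0 = 1"
  then obtain f :: "'a \<Rightarrow> real" where f: "bounded_linear f" "f x0 = 1" "\<And>v. \<bar>f v\<bar> \<le> norm v"
    using real_norming_functional by blast
  then have lin: "linear f" and le: "\<And>v. f v \<le> norm v"
    using bounded_linear.linear abs_le_D1 by blast+
  note norm_le = norm_complexify_le[OF lin le]
  have "bounded_linear (complexify scC f)"
    using norm_le lin
    by (intro bounded_linear_intro[where K = 1])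
       (simp_all add: complexify_def linear_add linear_scale complex_normed_structureD(4) scC_scaleR
          scaleR_conv_of_real algebra_simps)
  then have "bfun scC (complexify scC f)"
    unfolding bfun_def using complexify_scC[OF lin] by blast
  moreover have "complexify scC f x0 = 1"
  proof -
    have "(Re (complexify scC f x0))\<^sup>2 + (Im (complexify scC f x0))\<^sup>2 \<le> 1"
      using norm_le[of x0] \<open>norm x0 = 1\<close> by (simp add: cmod_def)
    then show ?thesis using f(2) by (simp add: complexify_def complex_eq_iff)
  qed
  ultimately show "\<exists>F. (x0, F) \<in> states scC"
    using \<open>norm x0 = 1\<close> norm_le by (blast intro: states_intro)
qed (use complex_normed_structureD in simp_all)

end

theorem proposition2p3:
  fixes scC :: "complex \<Rightarrow> 'b::banach \<Rightarrow> 'b"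
  shows "((\<exists>x::'a::banach. x \<noteq> 0) \<and> numidx (scaleR :: real \<Rightarrow> 'a \<Rightarrow> 'a) = 1 \<longrightarrow>
           (BPBpp_nu (scaleR :: real \<Rightarrow> 'a \<Rightarrow> 'a) \<longleftrightarrow> BPBop_nu (scaleR :: real \<Rightarrow> 'a \<Rightarrow> 'a)) \<and>
           (BPBop_nu (scaleR :: real \<Rightarrow> 'a \<Rightarrow> 'a) \<longleftrightarrow> one_dim (scaleR :: real \<Rightarrow> 'a \<Rightarrow> 'a)))
       \<and> (complex_normed_structure scC \<and> (\<exists>x::'b. x \<noteq> 0) \<and> numidx scC = 1 \<longrightarrow>
           (BPBpp_nu scC \<longleftrightarrow> BPBop_nu scC) \<and> (BPBop_nu scC \<longleftrightarrow> one_dim scC))"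
proof (rule conjI; rule impI)
  assume "(\<exists>x::'a. x \<noteq> 0) \<and> numidx (scaleR :: real \<Rightarrow> 'a \<Rightarrow> 'a) = 1"
  then show "(BPBpp_nu (scaleR :: real \<Rightarrow> 'a \<Rightarrow> 'a) \<longleftrightarrow> BPBop_nu (scaleR :: real \<Rightarrow> 'a \<Rightarrow> 'a)) \<and>
      (BPBop_nu (scaleR :: real \<Rightarrow> 'a \<Rightarrow> 'a) \<longleftrightarrow> one_dim (scaleR :: real \<Rightarrow> 'a \<Rightarrow> 'a))"
    using normed_space_with_states.BPB_nu_iff_one_dim[OF normed_space_with_states_real] by blast
next
  assume "complex_normed_structure scC \<and> (\<exists>x::'b. x \<noteq> 0) \<and> numidx scC = 1"
  then show "(BPBpp_nu scC \<longleftrightarrow> BPBop_nu scC) \<and> (BPBop_nu scC \<longleftrightarrow> one_dim scC)"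
    using normed_space_with_states.BPB_nu_iff_one_dim[OF normed_space_with_states_complex] by blast
qed

end
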